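(* Let $k>5$ and suppose the canonical system $\mathcal D$ of all splits of $(R^1,R^2)$ has a maximally-connected coupling $r=(r_{ij})$. Then for every $m$ with $2<m\le k/2$ and every $W=\{i_1,\dots,i_m\}\subset\{1,\dots,k\}$, the probability that the corresponding $m$-split equals $1$ in both bunches is determined by the 1-splits and 2-splits, namely $$\min\Big(\sum_{j=1}^m p_{i_j},\sum_{j=1}^m q_{i_j}\Big)=\sum_{j=1}^{m}\min(p_{i_j},q_{i_j})+\sum_{j=1}^{m-1}\sum_{j'=j+1}^{m}\Big[\min(p_{i_j}+p_{i_{j'}},q_{i_j}+q_{i_{j'}})-\min(p_{i_j},q_{i_j})-\min(p_{i_{j'}},q_{i_{j'}})\Big].$$
   Context: Let $R^1,R^2$ be two stochastically unrelated random variables with values in $\{1,\dots,k\}$, $\Pr[R^1=i]=p_i$, $\Pr[R^2=i]=q_i$, where $p_i,q_i\ge0$ and $\sum_i p_i=\sum_i q_i=1$. For $W\subseteq\{1,\dots,k\}$ write $p(W)=\sum_{i\in W}p_i$, $q(W)=\sum_{i\in W}q_i$. For every nonempty proper subset $W$ (with $W$ and its complement identified), the split $D^c_W$ ($c=1,2$) equals $1$ iff $R^c\in W$; it is called an $m$-split if $|W|=m$. The canonical system $\mathcal D$ consists of all splits of $R^1$ (one bunch) and of $R^2$ (another bunch). A coupling of $\mathcal D$ amounts to a $k\times k$ matrix $r=(r_{ij})$ of nonnegative reals with row sums $p_i$ and column sums $q_j$. It is maximally connected if for every $W$ the pair of splits under $r$ is a maximal coupling of $D^1_W,D^2_W$,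 equivalently $\sum_{i,j\in W} r_{ij}=\min(p(W),q(W))$ for every nonempty proper $W$. *)

theory Defs
  imports Complex_Main
begin

definition is_distribution :: "nat \<Rightarrow> (nat \<Rightarrow> real) \<Rightarrow> bool" where
  "is_distribution k p \<longleftrightarrow> (\<forall>i\<in>{1..k}. p i \<ge> 0) \<and> (\<Sum>i\<in>{1..k}. p i) = 1"

definition is_coupling :: "nat \<Rightarrow> (nat \<Rightarrow> real) \<Rightarrow> (nat \<Rightarrow> real) \<Rightarrow> (nat \<Rightarrow> nat \<Rightarrow> real) \<Rightarrow> bool" where
  "is_coupling k p q r \<longleftrightarrow>
     (\<forall>i\<in>{1..k}. \<forall>j\<in>{1..k}. r i j \<ge> 0) \<and>
     (\<forall>i\<in>{1..k}. (\<Sum>j\<in>{1..k}. r i j) = p i) \<and>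
     (\<forall>j\<in>{1..k}. (\<Sum>i\<in>{1..k}. r i j) = q j)"

text \<open>Maximally connected: for every nonempty proper W, Pr[R^1 in W, R^2 in W] = min(p(W), q(W)).\<close>

definition maximally_connected :: "nat \<Rightarrow> (nat \<Rightarrow> real) \<Rightarrow> (nat \<Rightarrow> real) \<Rightarrow> (nat \<Rightarrow> nat \<Rightarrow> real) \<Rightarrow> bool" where
  "maximally_connected k p q r \<longleftrightarrow> is_coupling k p q r \<and>
     (\<forall>W. W \<subseteq> {1..k} \<and> W \<noteq> {} \<and> W \<noteq> {1..k} \<longrightarrow>
        (\<Sum>i\<in>W. \<Sum>j\<in>W. r i j) = min (\<Sum>i\<in>W. p i) (\<Sum>i\<in>W. q i))"

end

theory Submission
  imports Defs
begin

text \<open>Taking W a singleton or a pair fixes the diagonal entries r i i and the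
  symmetric sums r i j + r j i; since every block splits into its diagonal and its
  off-diagonal pairs, min (p W) (q W) is determined by these 1- and 2-split values.
  This needs the singletons and pairs to be proper subsets, i.e. k > 2.\<close>

lemma sum_split_at:
  fixes f :: "nat \<Rightarrow> 'a::comm_monoid_add"
  assumes "finite W" "i \<in> W"
  shows "(\<Sum>j\<in>W. f j) = f i + (\<Sum>j\<in>{j\<in>W. i < j}. f j) + (\<Sum>j\<in>{j\<in>W. j < i}. f j)"
proof -
  have W: "W = insert i ({j\<in>W. i < j} \<union> {j\<in>W. j < i})"
    using assms(2) by auto
  have "(\<Sum>j\<in>W. f j) = f i + (\<Sum>j\<in>{j\<in>W. i < j} \<union> {j\<in>W. j < i}. f j)"
    by (subst W, subst sum.insert) (use assms(1) in auto)
  also have "\<dots> = f i + ((\<Sum>j\<in>{j\<in>W. i < j}. f j) + (\<Sum>j\<in>{j\<in>W. j < i}. f j))"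
    by (subst sum.union_disjoint) (use assms(1) in auto)
  finally show ?thesis
    by (simp add: add.assoc)
qed

lemma sum_square_diagonal_upper:
  fixes r :: "nat \<Rightarrow> nat \<Rightarrow> 'a::comm_monoid_add"
  assumes "finite W"
  shows "(\<Sum>i\<in>W. \<Sum>j\<in>W. r i j) =
           (\<Sum>i\<in>W. r i i) + (\<Sum>i\<in>W. \<Sum>j\<in>{j\<in>W. i < j}. r i j + r j i)"
proof -
  have "(\<Sum>i\<in>W. \<Sum>j\<in>W. r i j) =
          (\<Sum>i\<in>W. r i i + (\<Sum>j\<in>{j\<in>W. i < j}. r i j) + (\<Sum>j\<in>{j\<in>W. j < i}. r i j))"
    using assms by (intro sum.cong refl sum_split_at)
  also have "\<dots> = (\<Sum>i\<in>W. r i i) + (\<Sum>i\<in>W. \<Sum>j\<in>{j\<in>W. i < j}. r i j)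
                   + (\<Sum>i\<in>W. \<Sum>j\<in>{j\<in>W. j < i}. r i j)"
    by (simp add: sum.distrib)
  also have "(\<Sum>i\<in>W. \<Sum>j\<in>{j\<in>W. j < i}. r i j) = (\<Sum>i\<in>W. \<Sum>j\<in>{j\<in>W. i < j}. r j i)"
    by (rule sum.swap_restrict) (use assms in auto)
  finally show ?thesis
    by (simp add: sum.distrib add.assoc)
qed

lemma maximally_connected_block:
  assumes "maximally_connected k p q r" "W \<subseteq> {1..k}" "W \<noteq> {}" "card W < k"
  shows "(\<Sum>i\<in>W. \<Sum>j\<in>W. r i j) = min (\<Sum>i\<in>W. p i) (\<Sum>i\<in>W. q i)"
proof -
  have "W \<noteq> {1..k}"
    using assms(4) by auto
  then show ?thesis
    using assms(1-3) unfolding maximally_connected_def by blast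
qed

lemma maximally_connected_diagonal:
  assumes "maximally_connected k p q r" "1 < k" "i \<in> {1..k}"
  shows "r i i = min (p i) (q i)"
  using maximally_connected_block[of k p q r "{i}"] assms by simp

lemma maximally_connected_pair:
  assumes "maximally_connected k p q r" "2 < k" "i \<in> {1..k}" "j \<in> {1..k}" "i \<noteq> j"
  shows "r i j + r j i = min (p i + p j) (q i + q j) - min (p i) (q i) - min (p j) (q j)"
proof -
  have "(\<Sum>a\<in>{i,j}. \<Sum>b\<in>{i,j}. r a b) = min (\<Sum>a\<in>{i,j}. p a) (\<Sum>a\<in>{i,j}. q a)"
    using assms by (intro maximally_connected_block) auto
  then show ?thesis
    using assms maximally_connected_diagonal[OF assms(1)] by simp
qed

theorem theorem4:
  fixes k :: nat and p q :: "nat \<Rightarrow> real" and r :: "nat \<Rightarrow> nat \<Rightarrow> real"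
  assumes "k > 5"
    and "is_distribution k p" and "is_distribution k q"
    and "maximally_connected k p q r"
  shows "\<forall>W m. W \<subseteq> {1..k} \<and> card W = m \<and> 2 < m \<and> 2 * m \<le> k \<longrightarrow>
     min (\<Sum>i\<in>W. p i) (\<Sum>i\<in>W. q i) =
       (\<Sum>i\<in>W. min (p i) (q i)) +
       (\<Sum>i\<in>W. \<Sum>j\<in>{j\<in>W. i < j}.
          min (p i + p j) (q i + q j) - min (p i) (q i) - min (p j) (q j))"
proof (intro allI impI)
  fix W m
  assume W: "W \<subseteq> {1..k} \<and> card W = m \<and> 2 < m \<and> 2 * m \<le> k"
  then have "finite W" "W \<noteq> {}"
    using finite_subset by auto
  have "min (\<Sum>i\<in>W. p i) (\<Sum>i\<in>W. q i) = (\<Sum>i\<in>W. \<Sum>j\<in>W. r i j)"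
    using W \<open>W \<noteq> {}\<close> by (intro maximally_connected_block[OF assms(4), symmetric]) auto
  also have "\<dots> = (\<Sum>i\<in>W. r i i) + (\<Sum>i\<in>W. \<Sum>j\<in>{j\<in>W. i < j}. r i j + r j i)"
    using \<open>finite W\<close> by (rule sum_square_diagonal_upper)
  also have "\<dots> = (\<Sum>i\<in>W. min (p i) (q i)) +
       (\<Sum>i\<in>W. \<Sum>j\<in>{j\<in>W. i < j}.
          min (p i + p j) (q i + q j) - min (p i) (q i) - min (p j) (q j))"
  proof -
    have "i \<in> {1..k}" if "i \<in> W" for i
      using W that by blast
    then show ?thesis
      using assms(1) maximally_connected_diagonal[OF assms(4)] maximally_connected_pair[OF assms(4)]
      by (intro arg_cong2[where f = "(+)"] sum.cong refl) auto
  qed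
  finally show "min (\<Sum>i\<in>W. p i) (\<Sum>i\<in>W. q i) = (\<Sum>i\<in>W. min (p i) (q i)) +
       (\<Sum>i\<in>W. \<Sum>j\<in>{j\<in>W. i < j}.
          min (p i + p j) (q i + q j) - min (p i) (q i) - min (p j) (q j))" .
qed

end
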